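(* Let $A$ be a commutative $\mathbb C$-algebra, $q\in\mathbb C\setminus\{0\}$, $k$ a positive integer and $n$ a positive integer. Let $g\in A$ and $\mathfrak e_i,\mathfrak h_i,\mathfrak p_i\in A$ ($0\le i\le n$) satisfy $\mathfrak e_0=\mathfrak h_0=1$, $\mathfrak p_0=q^{1-k}\bigl(1+(k-1)_q\bigr)$, and for every $1\le m\le n$ $$\sum_{i=0}^{m-1}(-q)^i\mathfrak e_i\mathfrak p_{m-i}=(-1)^{m-1}m_q\,\mathfrak e_m+(-1)^mq\sum_{i=1}^{\lfloor m/2\rfloor}\bigl(q^{m-2i-k}-q^{-m+2i}\bigr)\mathfrak e_{m-2i}g^i,$$ $$\sum_{i=0}^{m-1}q^{-i}\mathfrak h_i\mathfrak p_{m-i}=m_q\,\mathfrak h_m+\sum_{i=1}^{\lfloor m/2\rfloor}\bigl(q^{m-2i-1}+q^{-m+2i+1-k}\bigr)\mathfrak h_{m-2i}g^i,$$ and for every $0\le m\le n$: $\sum_{i=0}^m(-1)^i\mathfrak e_i\mathfrak h_{m-i}=\delta_{m,0}-\delta_{m,2}\,g$. Define $\mathfrak e'_i,\mathfrak h'_i$ by $\mathfrak e'_i=\mathfrak h'_i=0$ for $i<0$ and $\mathfrak e'_i=\mathfrak e_i+\mathfrak e'_{i-2}g$, $\mathfrak h'_i=\mathfrak h_i+\mathfrak h'_{i-2}g$ for $i\ge0$; define $\mathfrak p'_0=q^{-k}k_q$, $\mathfrak p'_1=\mathfrak p_1$, $\mathfrak p'_i=\mathfrak p_i+(q^2\mathfrak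 p'_{i-2}-\mathfrak p_{i-2})g$ ($i\ge2$); and $\mathfrak p''_0=q^{2-k}(k-2)_q$, $\mathfrak p''_1=\mathfrak p_1$, $\mathfrak p''_i=\mathfrak p_i+(q^{-2}\mathfrak p''_{i-2}-\mathfrak p_{i-2})g$ ($i\ge2$). Then for all $1\le m\le n$ $$\sum_{i=0}^{m-1}(-q)^i\mathfrak e_i\mathfrak p'_{m-i}=(-1)^{m-1}m_q\,\mathfrak e_m,\qquad \sum_{i=0}^{m-1}q^{-i}\mathfrak h_i\mathfrak p''_{m-i}=m_q\,\mathfrak h_m,$$ and for all $0\le m\le n$ $$\sum_{i=0}^m(-1)^i\mathfrak e'_i\mathfrak h_{m-i}=\delta_{m,0}=\sum_{i=0}^m(-1)^i\mathfrak e_i\mathfrak h'_{m-i}.$$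
   Context: For an integer $m\ge0$, $m_q:=q^{m-1}+q^{m-3}+\dots+q^{1-m}$ (so $m_q=(q^m-q^{-m})/(q-q^{-1})$ when $q^2\ne1$, and $0_q=0$); for negative $m$, $m_q:=-(-m)_q$. $\delta_{a,b}$ is the Kronecker symbol. *)

theory Defs
  imports Complex_Main
begin

text \<open>A commutative C-algebra: a commutative ring A together with its structure map,
  a unital ring homomorphism from the complex numbers into A.\<close>
definition C_alg_map :: "(complex \<Rightarrow> 'a::comm_ring_1) \<Rightarrow> bool" where
  "C_alg_map \<phi> \<longleftrightarrow> \<phi> 1 = 1 \<and> (\<forall>x y. \<phi> (x + y) = \<phi> x + \<phi> y) \<and> (\<forall>x y. \<phi> (x * y) = \<phi> x * \<phi> y)"

definition qint :: "complex \<Rightarrow> int \<Rightarrow> complex" where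
  "qint q m = (if m \<ge> 0 then (\<Sum>j<nat m. q powi (m - 1 - 2 * int j))
               else - (\<Sum>j<nat (- m). q powi (- m - 1 - 2 * int j)))"

fun shiftseq :: "(nat \<Rightarrow> 'a::comm_ring_1) \<Rightarrow> 'a \<Rightarrow> nat \<Rightarrow> 'a" where
  "shiftseq x g 0 = x 0"
| "shiftseq x g (Suc 0) = x 1"
| "shiftseq x g (Suc (Suc i)) = x (Suc (Suc i)) + shiftseq x g i * g"

fun pseq :: "'a::comm_ring_1 \<Rightarrow> 'a \<Rightarrow> (nat \<Rightarrow> 'a) \<Rightarrow> 'a \<Rightarrow> nat \<Rightarrow> 'a" where
  "pseq c r p g 0 = c"
| "pseq c r p g (Suc 0) = p 1"
| "pseq c r p g (Suc (Suc i)) = p (Suc (Suc i)) + (r * pseq c r p g i - p i) * g"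

end

theory Submission
  imports Defs
begin

text \<open>Each identity is proved by induction on \<open>m\<close> in steps of two. The recursions defining
  \<open>e'\<close>, \<open>h'\<close>, \<open>p'\<close> and \<open>p''\<close> are such that passing from \<open>m - 2\<close> to \<open>m\<close> multiplies the
  correction terms of the hypotheses by \<open>g\<close> and adds the one of index \<open>m - 2\<close>, so all terms
  involving \<open>g\<close> cancel. What remains at each step is a scalar identity between \<open>q\<close>-integers,
  which follows from \<open>m\<^sub>q = q\<^bsup>m-1\<^esup> + q\<^sup>-\<^sup>1 (m-1)\<^sub>q\<close> and
  \<open>(q - q\<^sup>-\<^sup>1) m\<^sub>q = q\<^sup>m - q\<^sup>-\<^sup>m\<close>. For \<open>e'\<close> and \<open>h'\<close> this is the generating-function
  statement that dividing \<open>E(-t) H(t) = 1 - g t\<^sup>2\<close> by \<open>1 - g t\<^sup>2\<close> gives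
  \<open>E'(-t) H(t) = E(-t) H'(t) = 1\<close>.\<close>

lemma qint_uminus: "qint q (- m) = - qint q m"
  by (simp add: qint_def)

lemma qint_of_nat: "qint q (int t) = (\<Sum>j<t. q powi (int t - 1 - 2 * int j))"
  by (simp add: qint_def)

lemma qint_Suc_first:
  assumes "q \<noteq> 0"
  shows "qint q (int t + 1) = q ^ t + qint q (int t) / q"
proof -
  have "qint q (int t + 1) = q ^ t + (\<Sum>j<t. q powi (int t - 1 - 2 * int j - 1))"
    using qint_of_nat[of q "Suc t"] unfolding sum.lessThan_Suc_shift by (simp add: algebra_simps)
  also have "(\<Sum>j<t. q powi (int t - 1 - 2 * int j - 1)) = (\<Sum>j<t. q powi (int t - 1 - 2 * int j) / q)"
    using assms power_int_diff[of q "int t - 1 - 2 * int _" 1] by simp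
  finally show ?thesis by (simp add: qint_of_nat sum_divide_distrib)
qed

lemma qint_Suc_last:
  assumes "q \<noteq> 0"
  shows "qint q (int t + 1) = q powi (- int t) + q * qint q (int t)"
proof -
  have "qint q (int t + 1) = q powi (- int t) + (\<Sum>j<t. q powi (int t - 1 - 2 * int j + 1))"
    using qint_of_nat[of q "Suc t"] unfolding sum.lessThan_Suc by (simp add: algebra_simps)
  also have "(\<Sum>j<t. q powi (int t - 1 - 2 * int j + 1)) = (\<Sum>j<t. q powi (int t - 1 - 2 * int j) * q)"
    using assms power_int_add[of q "int t - 1 - 2 * int _" 1] by simp
  finally show ?thesis by (simp add: qint_of_nat flip: sum_distrib_right)
qed

lemma qint_add_one:
  assumes "q \<noteq> 0"
  shows "qint q (m + 1) = q powi m + qint q m / q"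
proof (cases m rule: int_cases)
  case (nonneg t)
  then show ?thesis using qint_Suc_first[OF assms] by simp
next
  case (neg t)
  then have m: "m = - (int t + 1)" by simp
  have "q powi m = q powi (- int t) / q"
    using assms power_int_diff[of q "- int t" 1] by (simp add: m)
  moreover have "qint q m = - (q powi (- int t) + q * qint q (int t))"
    unfolding m qint_uminus qint_Suc_last[OF assms] ..
  ultimately have "q powi m + qint q m / q = - qint q (int t)"
    using assms by (simp add: diff_divide_distrib add_divide_distrib)
  also have "\<dots> = qint q (m + 1)"
    using qint_uminus[of q "int t"] by (simp add: m)
  finally show ?thesis ..
qed

lemma qint_closed_form:
  assumes "q \<noteq> 0"
  shows "(q - 1 / q) * qint q (int t) = q ^ t - 1 / q ^ t"
proof (induction t)
  case 0
  then show ?case by (simp add: qint_def)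
next
  case (Suc t)
  have "(q - 1 / q) * qint q (int (Suc t)) = (q - 1 / q) * q ^ t + ((q - 1 / q) * qint q (int t)) / q"
    using qint_Suc_first[OF assms, of t] by (simp add: algebra_simps)
  also have "\<dots> = q ^ Suc t - 1 / q ^ Suc t"
    unfolding Suc using assms by (simp add: field_simps)
  finally show ?case .
qed

text \<open>In the paper's notation: \<open>p\<^sub>0 = q\<^sup>2 p'\<^sub>0 - q + q\<^bsup>1-k\<^esup>\<close> and
  \<open>p\<^sub>0 = q\<^sup>-\<^sup>2 p''\<^sub>0 + q\<^bsup>1-k\<^esup> + q\<^sup>-\<^sup>1\<close>.\<close>

lemma initial_value_identity_e:
  assumes "q \<noteq> 0"
  shows "q powi (1 - k) * (1 + qint q (k - 1))
    = q\<^sup>2 * (q powi (- k) * qint q k) - q + q powi (1 - k)"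
proof -
  have rec: "qint q k = q powi (k - 1) + qint q (k - 1) / q"
    using qint_add_one[OF assms, of "k - 1"] by simp
  show ?thesis
    unfolding rec using assms
    by (simp add: power_int_add power_int_diff power_int_minus field_simps power2_eq_square)
qed

lemma initial_value_identity_h:
  assumes "q \<noteq> 0"
  shows "q powi (1 - k) * (1 + qint q (k - 1))
    = q powi (- 2) * (q powi (2 - k) * qint q (k - 2)) + q powi (1 - k) + 1 / q"
proof -
  have rec: "qint q (k - 1) = q powi (k - 2) + qint q (k - 2) / q"
    using qint_add_one[OF assms, of "k - 2"] by simp
  show ?thesis
    unfolding rec using assms
    by (simp add: power_int_add power_int_diff power_int_minus field_simps power2_eq_square)
qed

lemma minus_one_power_pred_qint: "(- 1) ^ (j - 1) * qint q (int j) = - ((- 1) ^ j * qint q (int j))"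
  by (cases j) (simp_all add: qint_def)

lemma C_alg_map_add: "C_alg_map \<phi> \<Longrightarrow> \<phi> (x + y) = \<phi> x + \<phi> y"
  by (simp add: C_alg_map_def)

lemma C_alg_map_mult: "C_alg_map \<phi> \<Longrightarrow> \<phi> (x * y) = \<phi> x * \<phi> y"
  by (simp add: C_alg_map_def)

lemma C_alg_map_zero: "C_alg_map \<phi> \<Longrightarrow> \<phi> 0 = 0"
  using C_alg_map_add[of \<phi> 0 0] by simp

lemma tail_sum_Suc_Suc:
  fixes F :: "nat \<Rightarrow> 'a::comm_semiring_1"
  shows "(\<Sum>i=1..Suc (Suc j) div 2. F (Suc (Suc j) - 2 * i) * g ^ i)
    = g * (F j + (\<Sum>i=1..j div 2. F (j - 2 * i) * g ^ i))"
proof -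
  have "(\<Sum>i=1..Suc (Suc j) div 2. F (Suc (Suc j) - 2 * i) * g ^ i)
      = (\<Sum>i=0..j div 2. F (j - 2 * i) * g ^ Suc i)"
    using sum.shift_bounds_cl_Suc_ivl[of "\<lambda>i. F (Suc (Suc j) - 2 * i) * g ^ i" 0 "j div 2"] by simp
  also have "\<dots> = g * (\<Sum>i=0..j div 2. F (j - 2 * i) * g ^ i)"
    by (simp add: sum_distrib_left algebra_simps)
  finally show ?thesis
    by (simp add: sum.atLeast_Suc_atMost[of 0] algebra_simps)
qed

lemma sum_mult_pseq_Suc_Suc:
  fixes a :: "nat \<Rightarrow> 'a::comm_ring_1"
  shows "(\<Sum>i<Suc (Suc j). a i * pseq c r p g (Suc (Suc j) - i))
    = (\<Sum>i<Suc (Suc j). a i * p (Suc (Suc j) - i))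
      + g * (r * ((\<Sum>i<j. a i * pseq c r p g (j - i)) + a j * c)
             - ((\<Sum>i<j. a i * p (j - i)) + a j * p 0))"
proof -
  have "(\<Sum>i\<le>j. a i * pseq c r p g (Suc (Suc j) - i))
      = (\<Sum>i\<le>j. a i * p (Suc (Suc j) - i) + g * (r * (a i * pseq c r p g (j - i)) - a i * p (j - i)))"
    by (rule sum.cong) (auto simp: Suc_diff_le algebra_simps)
  then show ?thesis
    by (simp add: lessThan_Suc_atMost[symmetric] sum.distrib sum_subtractf sum_distrib_left algebra_simps)
qed

lemma pseq_convolution_identity:
  fixes a T F :: "nat \<Rightarrow> 'a::comm_ring_1"
  assumes conv: "\<And>m. m \<le> n \<Longrightarrow>
      (\<Sum>i<m. a i * p (m - i)) = T m + (\<Sum>i=1..m div 2. F (m - 2 * i) * g ^ i)"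
    and coeff: "\<And>j. Suc (Suc j) \<le> n \<Longrightarrow> F j + r * (T j + a j * c) = T j + a j * p 0"
  shows "m \<le> n \<Longrightarrow> (\<Sum>i<m. a i * pseq c r p g (m - i)) = T m"
proof (induction m rule: nat_induct2)
  case 0
  then show ?case using conv[of 0] by simp
next
  case 1
  then show ?case using conv[of 1] by simp
next
  case (step j)
  let ?E = "\<lambda>m. \<Sum>i<m. a i * pseq c r p g (m - i)"
  let ?P = "\<lambda>m. \<Sum>i<m. a i * p (m - i)"
  let ?tail = "\<lambda>m. \<Sum>i=1..m div 2. F (m - 2 * i) * g ^ i"
  have "j \<le> n" "Suc (Suc j) \<le> n" using step.prems by simp_all
  have "?E (Suc (Suc j)) = ?P (Suc (Suc j)) + g * (r * (?E j + a j * c) - (?P j + a j * p 0))"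
    by (rule sum_mult_pseq_Suc_Suc)
  also have "\<dots> = T (Suc (Suc j)) + ?tail (Suc (Suc j))
      + g * (r * (T j + a j * c) - (T j + ?tail j + a j * p 0))"
    by (simp only: conv \<open>j \<le> n\<close> \<open>Suc (Suc j) \<le> n\<close> step.IH)
  also have "?tail (Suc (Suc j)) = g * (F j + ?tail j)"
    by (rule tail_sum_Suc_Suc)
  also have "T (Suc (Suc j)) + g * (F j + ?tail j)
      + g * (r * (T j + a j * c) - (T j + ?tail j + a j * p 0))
      = T (Suc (Suc j)) + g * (F j + r * (T j + a j * c) - (T j + a j * p 0))"
    by (simp add: algebra_simps)
  finally show ?case
    using coeff[OF \<open>Suc (Suc j) \<le> n\<close>] by simp
qed

text \<open>The hypothesis \<open>coeff\<close> of \<open>pseq_convolution_identity\<close> for the two Newton-type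
  identities, with the common factor \<open>e\<^sub>j\<close> resp. \<open>h\<^sub>j\<close> cancelled.\<close>

lemma e_coefficient_identity:
  assumes "q \<noteq> 0"
  shows "(- 1) ^ j * q * (q powi (int j - k) - q powi (- int j))
      + q\<^sup>2 * ((- 1) ^ (j - 1) * qint q (int j) + (- q) ^ j * (q powi (- k) * qint q k))
    = (- 1) ^ (j - 1) * qint q (int j) + (- q) ^ j * (q powi (1 - k) * (1 + qint q (k - 1)))"
proof -
  have "(- 1) ^ j * q * (q powi (int j - k) - q powi (- int j))
      + q\<^sup>2 * ((- 1) ^ (j - 1) * qint q (int j) + (- q) ^ j * (q powi (- k) * qint q k))
    - ((- 1) ^ (j - 1) * qint q (int j) + (- q) ^ j * (q powi (1 - k) * (1 + qint q (k - 1))))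
    = (- 1) ^ j * q * (q ^ j - 1 / q ^ j - (q - 1 / q) * qint q (int j))"
    using assms unfolding minus_one_power_pred_qint initial_value_identity_e[OF assms] power_minus[of q j]
    by (simp add: power_int_add power_int_diff power_int_minus field_simps power2_eq_square)
  also have "\<dots> = 0"
    using qint_closed_form[OF assms] by simp
  finally show ?thesis by simp
qed

lemma h_coefficient_identity:
  assumes "q \<noteq> 0"
  shows "(q powi (int j - 1) + q powi (- int j + 1 - k))
      + q powi (- 2) * (qint q (int j) + q powi (- int j) * (q powi (2 - k) * qint q (k - 2)))
    = qint q (int j) + q powi (- int j) * (q powi (1 - k) * (1 + qint q (k - 1)))"
proof -
  have "(q powi (int j - 1) + q powi (- int j + 1 - k))
      + q powi (- 2) * (qint q (int j) + q powi (- int j) * (q powi (2 - k) * qint q (k - 2)))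
    - (qint q (int j) + q powi (- int j) * (q powi (1 - k) * (1 + qint q (k - 1))))
    = (q ^ j - 1 / q ^ j - (q - 1 / q) * qint q (int j)) / q"
    using assms unfolding initial_value_identity_h[OF assms]
    by (simp add: power_int_add power_int_diff power_int_minus field_simps power2_eq_square)
  also have "\<dots> = 0"
    using qint_closed_form[OF assms] by simp
  finally show ?thesis by simp
qed

lemma e_newton_identity_pseq:
  fixes \<phi> :: "complex \<Rightarrow> 'a::comm_ring_1" and k :: int
  assumes \<phi>: "C_alg_map \<phi>" and q0: "q \<noteq> 0"
    and p0: "p 0 = \<phi> (q powi (1 - k) * (1 + qint q (k - 1)))"
    and eqE: "\<And>m. 1 \<le> m \<Longrightarrow> m \<le> n \<Longrightarrow>
       (\<Sum>i<m. \<phi> ((- q) ^ i) * e i * p (m - i))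
       = \<phi> ((- 1) ^ (m - 1) * qint q (int m)) * e m
         + \<phi> ((- 1) ^ m * q) * (\<Sum>i=1..m div 2.
              \<phi> (q powi (int m - 2 * int i - k) - q powi (- int m + 2 * int i)) * e (m - 2 * i) * g ^ i)"
    and "m \<le> n"
  shows "(\<Sum>i<m. \<phi> ((- q) ^ i) * e i
        * pseq (\<phi> (q powi (- k) * qint q k)) (\<phi> (q ^ 2)) p g (m - i))
    = \<phi> ((- 1) ^ (m - 1) * qint q (int m)) * e m"
proof -
  define F where "F j = \<phi> ((- 1) ^ j * q * (q powi (int j - k) - q powi (- int j))) * e j" for j
  have tail: "\<phi> ((- 1) ^ m * q) * (\<Sum>i=1..m div 2.
      \<phi> (q powi (int m - 2 * int i - k) - q powi (- int m + 2 * int i)) * e (m - 2 * i) * g ^ i)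
    = (\<Sum>i=1..m div 2. F (m - 2 * i) * g ^ i)" for m
    unfolding sum_distrib_left
  proof (rule sum.cong[OF refl], goal_cases)
    case (1 i)
    then have "2 * i \<le> m" by auto
    then have sign: "(- 1 :: complex) ^ m = (- 1) ^ (m - 2 * i)"
      and exponents: "q powi (int m - 2 * int i - k) - q powi (- int m + 2 * int i)
        = q powi (int (m - 2 * i) - k) - q powi (- int (m - 2 * i))"
      by (simp_all add: minus_one_power_iff of_nat_diff)
    show ?case
      unfolding F_def sign exponents by (simp add: C_alg_map_mult[OF \<phi>] ac_simps)
  qed
  show ?thesis
  proof (rule pseq_convolution_identity[where F = F, OF _ _ \<open>m \<le> n\<close>], goal_cases)
    case (1 m)
    then show ?case
      using eqE[of m] tail[of m] by (cases "m = 0") (simp_all add: qint_def C_alg_map_zero[OF \<phi>])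
  next
    case (2 j)
    have "\<phi> ((- 1) ^ j * q * (q powi (int j - k) - q powi (- int j))
      + q\<^sup>2 * ((- 1) ^ (j - 1) * qint q (int j) + (- q) ^ j * (q powi (- k) * qint q k))) * e j
      = \<phi> ((- 1) ^ (j - 1) * qint q (int j) + (- q) ^ j * (q powi (1 - k) * (1 + qint q (k - 1)))) * e j"
      by (simp only: e_coefficient_identity[OF q0])
    then show ?case
      unfolding F_def p0
      by (simp only: C_alg_map_add[OF \<phi>] C_alg_map_mult[OF \<phi>]) (simp add: algebra_simps)
  qed
qed

lemma h_newton_identity_pseq:
  fixes \<phi> :: "complex \<Rightarrow> 'a::comm_ring_1" and k :: int
  assumes \<phi>: "C_alg_map \<phi>" and q0: "q \<noteq> 0"
    and p0: "p 0 = \<phi> (q powi (1 - k) * (1 + qint q (k - 1)))"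
    and eqH: "\<And>m. 1 \<le> m \<Longrightarrow> m \<le> n \<Longrightarrow>
       (\<Sum>i<m. \<phi> (q powi (- int i)) * h i * p (m - i))
       = \<phi> (qint q (int m)) * h m
         + (\<Sum>i=1..m div 2.
              \<phi> (q powi (int m - 2 * int i - 1) + q powi (- int m + 2 * int i + 1 - k))
                * h (m - 2 * i) * g ^ i)"
    and "m \<le> n"
  shows "(\<Sum>i<m. \<phi> (q powi (- int i)) * h i
        * pseq (\<phi> (q powi (2 - k) * qint q (k - 2))) (\<phi> (q powi (- 2))) p g (m - i))
    = \<phi> (qint q (int m)) * h m"
proof -
  define F where "F j = \<phi> (q powi (int j - 1) + q powi (- int j + 1 - k)) * h j" for j
  have tail: "(\<Sum>i=1..m div 2.
      \<phi> (q powi (int m - 2 * int i - 1) + q powi (- int m + 2 * int i + 1 - k)) * h (m - 2 * i) * g ^ i)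
    = (\<Sum>i=1..m div 2. F (m - 2 * i) * g ^ i)" for m
  proof (rule sum.cong[OF refl], goal_cases)
    case (1 i)
    then have "2 * i \<le> m" by auto
    then have "q powi (int m - 2 * int i - 1) + q powi (- int m + 2 * int i + 1 - k)
        = q powi (int (m - 2 * i) - 1) + q powi (- int (m - 2 * i) + 1 - k)"
      by (simp add: of_nat_diff algebra_simps)
    then show ?case
      by (simp add: F_def)
  qed
  show ?thesis
  proof (rule pseq_convolution_identity[where F = F, OF _ _ \<open>m \<le> n\<close>], goal_cases)
    case (1 m)
    then show ?case
      using eqH[of m] tail[of m] by (cases "m = 0") (simp_all add: qint_def C_alg_map_zero[OF \<phi>])
  next
    case (2 j)
    have "\<phi> ((q powi (int j - 1) + q powi (- int j + 1 - k))
      + q powi (- 2) * (qint q (int j) + q powi (- int j) * (q powi (2 - k) * qint q (k - 2)))) * h j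
      = \<phi> (qint q (int j) + q powi (- int j) * (q powi (1 - k) * (1 + qint q (k - 1)))) * h j"
      by (simp only: h_coefficient_identity[OF q0])
    then show ?case
      unfolding F_def p0
      by (simp only: C_alg_map_add[OF \<phi>] C_alg_map_mult[OF \<phi>]) (simp add: algebra_simps)
  qed
qed

lemma sum_mult_shiftseq_Suc_Suc:
  fixes a :: "nat \<Rightarrow> 'a::comm_ring_1"
  shows "(\<Sum>i\<le>Suc (Suc j). a i * shiftseq b g (Suc (Suc j) - i))
    = (\<Sum>i\<le>Suc (Suc j). a i * b (Suc (Suc j) - i)) + g * (\<Sum>i\<le>j. a i * shiftseq b g (j - i))"
proof -
  have "(\<Sum>i\<le>j. a i * shiftseq b g (Suc (Suc j) - i))
      = (\<Sum>i\<le>j. a i * b (Suc (Suc j) - i) + g * (a i * shiftseq b g (j - i)))"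
    by (rule sum.cong) (auto simp: Suc_diff_le algebra_simps)
  then show ?thesis
    by (simp add: sum.distrib sum_distrib_left algebra_simps)
qed

lemma shiftseq_convolution_delta:
  fixes a b :: "nat \<Rightarrow> 'a::comm_ring_1"
  assumes conv: "\<And>m. m \<le> n \<Longrightarrow>
      (\<Sum>i\<le>m. a i * b (m - i)) = (if m = 0 then 1 else 0) - (if m = 2 then g else 0)"
  shows "m \<le> n \<Longrightarrow> (\<Sum>i\<le>m. a i * shiftseq b g (m - i)) = (if m = 0 then 1 else 0)"
proof (induction m rule: nat_induct2)
  case 0
  then show ?case using conv[of 0] by simp
next
  case 1
  then show ?case using conv[of 1] by simp
next
  case (step j)
  then show ?case
    using conv[of "Suc (Suc j)"] sum_mult_shiftseq_Suc_Suc[of a b g j] by simp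
qed

lemma convolution_commute:
  fixes a b :: "nat \<Rightarrow> 'a::comm_semiring_0"
  shows "(\<Sum>i\<le>m. a i * b (m - i)) = (\<Sum>i\<le>m. b i * a (m - i))"
  using sum.atLeastAtMost_rev[where g = "\<lambda>i. a i * b (m - i)" and n = 0 and m = m]
  by (simp add: atMost_atLeast0 mult.commute)

lemma shiftseq_alternating:
  "(- 1) ^ i * shiftseq x g i = shiftseq (\<lambda>i. (- 1) ^ i * x i :: 'a::comm_ring_1) g i"
  by (induction x g i rule: shiftseq.induct) (simp_all add: algebra_simps)

lemma alternating_shiftseq_convolution_delta:
  fixes a b :: "nat \<Rightarrow> 'a::comm_ring_1"
  assumes conv: "\<And>m. m \<le> n \<Longrightarrow>
      (\<Sum>i\<le>m. (- 1) ^ i * a i * b (m - i)) = (if m = 0 then 1 else 0) - (if m = 2 then g else 0)"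
    and "m \<le> n"
  shows "(\<Sum>i\<le>m. (- 1) ^ i * shiftseq a g i * b (m - i)) = (if m = 0 then 1 else 0)"
proof -
  have "(\<Sum>i\<le>m. (- 1) ^ i * shiftseq a g i * b (m - i))
      = (\<Sum>i\<le>m. b i * shiftseq (\<lambda>i. (- 1) ^ i * a i) g (m - i))"
    unfolding shiftseq_alternating by (rule convolution_commute)
  also have "\<dots> = (if m = 0 then 1 else 0)"
  proof (rule shiftseq_convolution_delta[OF _ \<open>m \<le> n\<close>])
    fix l assume "l \<le> n"
    have "(\<Sum>i\<le>l. b i * ((- 1) ^ (l - i) * a (l - i))) = (\<Sum>i\<le>l. (- 1) ^ i * a i * b (l - i))"
      using convolution_commute[of b "\<lambda>i. (- 1) ^ i * a i" l] by simp
    then show "(\<Sum>i\<le>l. b i * ((- 1) ^ (l - i) * a (l - i)))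
        = (if l = 0 then 1 else 0) - (if l = 2 then g else 0)"
      using conv[OF \<open>l \<le> n\<close>] by simp
  qed
  finally show ?thesis .
qed

theorem lemma6p5:
  fixes \<phi> :: "complex \<Rightarrow> 'a::comm_ring_1"
    and q :: complex and k n :: nat
    and g :: 'a and e h p :: "nat \<Rightarrow> 'a"
  assumes alg: "C_alg_map \<phi>"
    and q0: "q \<noteq> 0" and kpos: "k > 0" and npos: "n > 0"
    and e0: "e 0 = 1" and h0: "h 0 = 1"
    and p0: "p 0 = \<phi> (q powi (1 - int k) * (1 + qint q (int k - 1)))"
    and eqE: "\<And>m. 1 \<le> m \<Longrightarrow> m \<le> n \<Longrightarrow>
       (\<Sum>i<m. \<phi> ((- q) ^ i) * e i * p (m - i))
       = \<phi> ((- 1) ^ (m - 1) * qint q (int m)) * e m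
         + \<phi> ((- 1) ^ m * q) * (\<Sum>i=1..m div 2.
              \<phi> (q powi (int m - 2 * int i - int k) - q powi (- int m + 2 * int i)) * e (m - 2 * i) * g ^ i)"
    and eqH: "\<And>m. 1 \<le> m \<Longrightarrow> m \<le> n \<Longrightarrow>
       (\<Sum>i<m. \<phi> (q powi (- int i)) * h i * p (m - i))
       = \<phi> (qint q (int m)) * h m
         + (\<Sum>i=1..m div 2.
              \<phi> (q powi (int m - 2 * int i - 1) + q powi (- int m + 2 * int i + 1 - int k)) * h (m - 2 * i) * g ^ i)"
    and eqEH: "\<And>m. m \<le> n \<Longrightarrow>
       (\<Sum>i\<le>m. (- 1) ^ i * e i * h (m - i))
       = (if m = 0 then 1 else 0) - (if m = 2 then g else 0)"
  shows "(\<forall>m. 1 \<le> m \<and> m \<le> n \<longrightarrow>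
           (\<Sum>i<m. \<phi> ((- q) ^ i) * e i * pseq (\<phi> (q powi (- int k) * qint q (int k))) (\<phi> (q ^ 2)) p g (m - i))
           = \<phi> ((- 1) ^ (m - 1) * qint q (int m)) * e m)
       \<and> (\<forall>m. 1 \<le> m \<and> m \<le> n \<longrightarrow>
           (\<Sum>i<m. \<phi> (q powi (- int i)) * h i * pseq (\<phi> (q powi (2 - int k) * qint q (int k - 2))) (\<phi> (q powi (-2))) p g (m - i))
           = \<phi> (qint q (int m)) * h m)
       \<and> (\<forall>m. m \<le> n \<longrightarrow>
           (\<Sum>i\<le>m. (- 1) ^ i * shiftseq e g i * h (m - i)) = (if m = 0 then 1 else 0)
         \<and> (\<Sum>i\<le>m. (- 1) ^ i * e i * shiftseq h g (m - i)) = (if m = 0 then 1 else 0))"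
proof -
  show ?thesis
    using e_newton_identity_pseq[OF alg q0 p0 eqE] h_newton_identity_pseq[OF alg q0 p0 eqH]
      alternating_shiftseq_convolution_delta[OF eqEH] shiftseq_convolution_delta[OF eqEH]
    by simp
qed

end
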